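(* Suppose $\rho>\max\left\{-\frac{\sigma_x^2+3\sigma_y^2}{4\sigma_x\sigma_y},\,-\frac{3\sigma_x^2+\sigma_y^2}{4\sigma_x\sigma_y}\right\}$. Then $(\mathbf a^*,\mathbf b^* )$ is a local equilibrium of $K$: all four first-order partial derivatives of $K(\mathbf a,\mathbf b)$ with respect to $x_1,y_1,x_2,y_2$ vanish at $(\mathbf a^*,\mathbf b^* )$, the point $\mathbf a^*$ is a strict local minimizer of $\mathbf a\mapsto K(\mathbf a,\mathbf b^* )$, and $\mathbf b^*$ is a strict local maximizer of $\mathbf b\mapsto K(\mathbf a^*,\mathbf b)$.
   Context: Standing setup. Fix $\sigma_x,\sigma_y>0$ and $\rho\in(-1,1)$, and let $(\xi,\eta)$ be a bivariate normal random vector with mean $(0,0)$ and covariance matrix $\Sigma=\begin{pmatrix}\sigma_x^2&\rho\sigma_x\sigma_y\\ \rho\sigma_x\sigma_y&\sigma_y^2\end{pmatrix}$. Player I (the minimizer) chooses $\mathbf a=(x_1,y_1)\in\mathbb R^2$ and Player II (the maximizer) chooses $\mathbf b=(x_2,y_2)\in\mathbb R^2$. Let $C_1(\mathbf a,\mathbf b)=\{(x,y):(x_1-x)^2+(y_1-y)^2<(x_2-x)^2+(y_2-y)^2\}$ and $C_2(\mathbf a,\mathbf b)=\{(x,y):(x_1-x)^2+(y_1-y)^2>(x_2-x)^2+(y_2-y)^2\}$. The payoff to Player II (paid by Player I) is $K(\mathbf a,\mathbf b)=x_1+y_1$ if $\mathbf a=\mathbf b$, and $K(\mathbf a,\mathbf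 b)=(x_1+y_1)\,P((\xi,\eta)\in C_1(\mathbf a,\mathbf b))+(x_2+y_2)\,P((\xi,\eta)\in C_2(\mathbf a,\mathbf b))$ if $\mathbf a\neq\mathbf b$. For $\mathbf a=(x,y)$ write $-\mathbf a=(-x,-y)$. Let $x_2^*=\frac{\sqrt{2\pi(\sigma_x^2+2\rho\sigma_x\sigma_y+\sigma_y^2)}}{4}$, $\mathbf b^*=(x_2^*,x_2^* )$ and $\mathbf a^*=(-x_2^*,-x_2^* )$. *)

theory Defs
  imports "HOL-Analysis.Analysis"
begin

definition bvn_density :: "real \<Rightarrow> real \<Rightarrow> real \<Rightarrow> real \<times> real \<Rightarrow> real" where
  "bvn_density sx sy r z =
     exp (- (1 / (2 * (1 - r^2))) *
            ((fst z)^2 / sx^2 - 2 * r * fst z * snd z / (sx * sy) + (snd z)^2 / sy^2))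
     / (2 * pi * sx * sy * sqrt (1 - r^2))"

definition bvn :: "real \<Rightarrow> real \<Rightarrow> real \<Rightarrow> (real \<times> real) measure" where
  "bvn sx sy r = density lborel (\<lambda>z. ennreal (bvn_density sx sy r z))"

definition C1 :: "real \<times> real \<Rightarrow> real \<times> real \<Rightarrow> (real \<times> real) set" where
  "C1 a b = {(x, y). (fst a - x)^2 + (snd a - y)^2 < (fst b - x)^2 + (snd b - y)^2}"

definition C2 :: "real \<times> real \<Rightarrow> real \<times> real \<Rightarrow> (real \<times> real) set" where
  "C2 a b = {(x, y). (fst a - x)^2 + (snd a - y)^2 > (fst b - x)^2 + (snd b - y)^2}"

definition Kpay :: "real \<Rightarrow> real \<Rightarrow> real \<Rightarrow> real \<times> real \<Rightarrow> real \<times> real \<Rightarrow> real" where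
  "Kpay sx sy r a b =
     (if a = b then fst a + snd a
      else (fst a + snd a) * measure (bvn sx sy r) (C1 a b)
         + (fst b + snd b) * measure (bvn sx sy r) (C2 a b))"

definition xstar :: "real \<Rightarrow> real \<Rightarrow> real \<Rightarrow> real" where
  "xstar sx sy r = sqrt (2 * pi * (sx^2 + 2 * r * sx * sy + sy^2)) / 4"

end

theory Submission
  imports Defs "HOL-Probability.Probability"
begin

text \<open>For \<open>a \<noteq> b\<close> the set \<open>C\<^sub>1(a, b)\<close> is an open half-plane bounded by the perpendicular bisector of
  \<open>a\<close> and \<open>b\<close>, so \<open>P(C\<^sub>1) = \<Phi>(c)\<close>, where \<open>c\<close> is the offset of the bisector divided by the standard
  deviation of \<open>\<langle>b - a, (\<xi>, \<eta>)\<rangle>\<close>. Hence \<open>K(a, b) = (x\<^sub>1 + y\<^sub>1) \<Phi>(c) + (x\<^sub>2 + y\<^sub>2) \<Phi>(-c)\<close> and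
  \<open>K(-b, -a) = -K(a, b)\<close>, which reduces the claims about Player II to those about Player I.

  Write \<open>a = a\<^sup>* + s (p, q)\<close> with \<open>s = x\<^sub>2\<^sup>*\<close>. Expanding \<open>\<Phi>\<close> to first order with a cubic remainder,
  the value of \<open>s\<close> is exactly what makes the linear terms of \<open>K(a, b\<^sup>*)/s\<close> cancel, leaving
  \<open>((\<sigma>\<^sub>x\<^sup>2 + 4\<rho>\<sigma>\<^sub>x\<sigma>\<^sub>y + 3\<sigma>\<^sub>y\<^sup>2) p\<^sup>2 + (3\<sigma>\<^sub>x\<^sup>2 + 4\<rho>\<sigma>\<^sub>x\<sigma>\<^sub>y + \<sigma>\<^sub>y\<^sup>2) q\<^sup>2) / (8 (\<sigma>\<^sub>x\<^sup>2 + 2\<rho>\<sigma>\<^sub>x\<sigma>\<^sub>y + \<sigma>\<^sub>y\<^sup>2))\<close>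
  up to \<open>O(|(p, q)|\<^sup>3)\<close>. The hypothesis on \<open>\<rho>\<close> says precisely that both coefficients are positive, so
  \<open>K(a, b\<^sup>*) - K(a\<^sup>*, b\<^sup>*)\<close> lies between two positive multiples of \<open>|a - a\<^sup>*|\<^sup>2\<close>; this gives both the
  vanishing partial derivatives and the strict local minimum.\<close>

section \<open>The standard normal distribution function\<close>

definition std_normal :: "real measure" where
  "std_normal = density lborel (\<lambda>x. ennreal (std_normal_density x))"

definition std_normal_cdf :: "real \<Rightarrow> real" where
  "std_normal_cdf t = measure std_normal {..<t}"

lemma prob_space_std_normal: "prob_space std_normal"
  unfolding std_normal_def by (rule prob_space_normal_density) simp

lemma sets_std_normal [simp]: "sets std_normal = sets borel"
  unfolding std_normal_def by simp

lemma emeasure_std_normal: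
  "A \<in> sets borel \<Longrightarrow>
    emeasure std_normal A = (\<integral>\<^sup>+x. ennreal (std_normal_density x) * indicator A x \<partial>lborel)"
  unfolding std_normal_def by (simp add: emeasure_density)

lemma measure_std_normal_singleton: "measure std_normal {c} = 0"
proof -
  have "emeasure std_normal {c} = (\<integral>\<^sup>+x. ennreal (std_normal_density x) * indicator {c} x \<partial>lborel)"
    by (simp add: emeasure_std_normal)
  also have "\<dots> = (\<integral>\<^sup>+(x::real). 0 \<partial>lborel)"
  proof (rule nn_integral_cong_AE)
    show "AE x in lborel. ennreal (std_normal_density x) * indicator {c} x = 0"
      using AE_lborel_singleton[of c] by eventually_elim (auto simp: indicator_def)
  qed
  finally show ?thesis by (simp add: measure_def)
qed

lemma std_normal_cdf_nonneg: "0 \<le> std_normal_cdf t"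
  by (simp add: std_normal_cdf_def)

lemma nn_integral_std_normal_lessThan:
  "(\<integral>\<^sup>+x. ennreal (std_normal_density x) * indicator {..<t} x \<partial>lborel) = ennreal (std_normal_cdf t)"
proof -
  interpret prob_space std_normal by (rule prob_space_std_normal)
  show ?thesis
    by (simp add: std_normal_cdf_def emeasure_std_normal[symmetric] emeasure_eq_measure)
qed

lemma std_normal_cdf_minus: "std_normal_cdf (- t) = 1 - std_normal_cdf t"
proof -
  interpret prob_space std_normal by (rule prob_space_std_normal)
  have "emeasure std_normal {..<-t} = (\<integral>\<^sup>+x. ennreal (std_normal_density x) * indicator {..<-t} x \<partial>lborel)"
    by (simp add: emeasure_std_normal)
  also have "\<dots> = ennreal \<bar>-1::real\<bar> *
      (\<integral>\<^sup>+x. ennreal (std_normal_density (0 + -1 * x)) * indicator {..<-t} (0 + -1*x) \<partial>lborel)"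
    by (rule nn_integral_real_affine) auto
  also have "\<dots> = (\<integral>\<^sup>+x. ennreal (std_normal_density x) * indicator {t<..} x \<partial>lborel)"
    by (simp, intro nn_integral_cong) (auto simp: normal_density_def indicator_def)
  also have "\<dots> = emeasure std_normal {t<..}" by (simp add: emeasure_std_normal)
  finally have reflect: "measure std_normal {..<-t} = measure std_normal {t<..}"
    by (simp add: measure_def)
  have "measure std_normal {t<..} = measure std_normal (space std_normal - {..t})"
    by (simp add: std_normal_def, intro arg_cong[where f="measure _"]) auto
  also have "\<dots> = 1 - measure std_normal {..t}" by (rule prob_compl) simp
  also have "measure std_normal {..t} = measure std_normal {..<t} + measure std_normal {t}"
    by (subst finite_measure_Union[symmetric]) (auto intro!: arg_cong[where f="measure _"])
  finally show ?thesis
    using reflect measure_std_normal_singleton[of t] by (simp add: std_normal_cdf_def)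
qed

lemma std_normal_cdf_zero: "std_normal_cdf 0 = 1/2"
  using std_normal_cdf_minus[of 0] by simp

lemma continuous_on_std_normal_density: "continuous_on S std_normal_density"
  unfolding normal_density_def by (intro continuous_intros) auto

lemma std_normal_cdf_diff:
  assumes "a \<le> b"
  shows "std_normal_cdf b - std_normal_cdf a = integral {a..b} std_normal_density"
proof -
  interpret prob_space std_normal by (rule prob_space_std_normal)
  have "measure std_normal {..<b} = measure std_normal ({..<a} \<union> {a..<b})"
    using assms by (intro arg_cong[where f="measure _"]) auto
  also have "\<dots> = measure std_normal {..<a} + measure std_normal {a..<b}"
    by (rule finite_measure_Union) auto
  finally have diff: "std_normal_cdf b - std_normal_cdf a = measure std_normal {a..<b}"
    by (simp add: std_normal_cdf_def)
  have integrable: "std_normal_density integrable_on {a..b}"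
    by (intro integrable_continuous_interval continuous_on_std_normal_density)
  have "emeasure std_normal {a..<b}
      = (\<integral>\<^sup>+x. ennreal (std_normal_density x) * indicator {a..<b} x \<partial>lborel)"
    by (simp add: emeasure_std_normal)
  also have "\<dots> = (\<integral>\<^sup>+x. ennreal (std_normal_density x) * indicator {a..b} x \<partial>lborel)"
  proof (rule nn_integral_cong_AE)
    show "AE x in lborel. ennreal (std_normal_density x) * indicator {a..<b} x
        = ennreal (std_normal_density x) * indicator {a..b} x"
      using AE_lborel_singleton[of b] by eventually_elim (auto simp: indicator_def)
  qed
  also have "\<dots> = ennreal (integral {a..b} std_normal_density)"
    using integrable by (intro nn_integral_has_integral_lebesgue') (auto intro: integrable_integral)
  finally show ?thesis
    using diff integral_nonneg[OF integrable] by (simp add: measure_def)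
qed

lemma DERIV_std_normal_cdf:
  "(std_normal_cdf has_real_derivative std_normal_density x) (at x)"
proof -
  have "((\<lambda>y. integral {x-1..y} std_normal_density) has_real_derivative std_normal_density x)
      (at x within {x-1..x+1})"
    by (rule integral_has_real_derivative) (auto intro: continuous_on_std_normal_density)
  moreover have "at x within {x-1..x+1} = at x"
    by (intro at_within_interior) auto
  ultimately have "((\<lambda>y. std_normal_cdf (x-1) + integral {x-1..y} std_normal_density)
      has_real_derivative std_normal_density x) (at x)"
    by (auto intro!: derivative_eq_intros)
  then show ?thesis
  proof (rule has_field_derivative_transform_within_open[of _ _ _ "{x-1<..}"])
    fix y assume "y \<in> {x-1<..}"
    then show "std_normal_cdf (x-1) + integral {x-1..y} std_normal_density = std_normal_cdf y"
      using std_normal_cdf_diff[of "x-1" y] by simp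
  qed auto
qed

lemma std_normal_density_zero: "std_normal_density 0 = 1 / sqrt (2 * pi)"
  by (simp add: std_normal_density_def)

lemma std_normal_density_le_zero: "std_normal_density t \<le> std_normal_density 0"
  by (simp add: std_normal_density_def divide_right_mono)

lemma std_normal_density_ge: "std_normal_density 0 * (1 - t^2/2) \<le> std_normal_density t"
proof -
  have "1 + (-(t^2/2)) \<le> exp (-(t^2/2))" by (rule exp_ge_add_one_self)
  then show ?thesis by (simp add: std_normal_density_def divide_right_mono)
qed

lemma std_normal_cdf_taylor_nonneg:
  assumes c: "0 \<le> c"
  defines "\<phi>0 \<equiv> std_normal_density 0"
  shows "std_normal_cdf c \<le> 1/2 + \<phi>0 * c"
    and "1/2 + \<phi>0 * c - \<phi>0 * c^3/6 \<le> std_normal_cdf c"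
proof -
  have "(\<lambda>t. 1/2 + \<phi>0 * t - std_normal_cdf t) 0 \<le> (\<lambda>t. 1/2 + \<phi>0 * t - std_normal_cdf t) c"
    using std_normal_density_le_zero unfolding \<phi>0_def
    by (intro DERIV_nonneg_imp_nondecreasing[OF c])
       (auto intro!: exI derivative_eq_intros DERIV_std_normal_cdf)
  then show "std_normal_cdf c \<le> 1/2 + \<phi>0 * c" by (simp add: std_normal_cdf_zero)
  have "(\<lambda>t. std_normal_cdf t - 1/2 - \<phi>0 * t + \<phi>0 * t^3/6) 0
      \<le> (\<lambda>t. std_normal_cdf t - 1/2 - \<phi>0 * t + \<phi>0 * t^3/6) c"
  proof (rule DERIV_nonneg_imp_nondecreasing[OF c], rule exI, rule conjI)
    fix x
    show "DERIV (\<lambda>t. std_normal_cdf t - 1/2 - \<phi>0 * t + \<phi>0 * t^3/6) x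
        :> std_normal_density x - \<phi>0 + \<phi>0 * x^2/2"
      by (auto intro!: derivative_eq_intros DERIV_std_normal_cdf simp: algebra_simps)
    show "0 \<le> std_normal_density x - \<phi>0 + \<phi>0 * x^2/2"
      using std_normal_density_ge[of x] by (simp add: \<phi>0_def algebra_simps)
  qed
  then show "1/2 + \<phi>0 * c - \<phi>0 * c^3/6 \<le> std_normal_cdf c" by (simp add: std_normal_cdf_zero)
qed

lemma std_normal_cdf_taylor:
  "\<bar>std_normal_cdf c - 1/2 - std_normal_density 0 * c\<bar> \<le> std_normal_density 0 * \<bar>c\<bar>^3/6"
proof (cases "0 \<le> c")
  case True
  then show ?thesis using std_normal_cdf_taylor_nonneg[OF True] by (simp add: abs_if)
next
  case False
  then have "0 \<le> -c" by simp
  from std_normal_cdf_taylor_nonneg[OF this] False show ?thesis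
    by (simp add: std_normal_cdf_minus abs_if)
qed

text \<open>The cubic Taylor remainder, with the constant \<open>\<pi>/3 \<le> 2\<close> absorbed.\<close>
lemma std_normal_cdf_taylor_cubic:
  "\<bar>std_normal_cdf c - 1/2 - std_normal_density 0 * c\<bar> \<le> 2 * \<bar>std_normal_density 0 * c\<bar>^3"
proof -
  have "\<bar>std_normal_density 0 * c\<bar>^3 * (pi / 3)
      = std_normal_density 0 * \<bar>c\<bar>^3 * ((std_normal_density 0)^2 * pi / 3)"
    by (simp add: abs_mult power_mult_distrib power3_eq_cube power2_eq_square)
  also have "(std_normal_density 0)^2 * pi / 3 = 1/6"
    by (simp add: std_normal_density_zero power_divide)
  finally have "std_normal_density 0 * \<bar>c\<bar>^3/6 = \<bar>std_normal_density 0 * c\<bar>^3 * (pi / 3)"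
    by (simp add: algebra_simps)
  also have "\<dots> \<le> \<bar>std_normal_density 0 * c\<bar>^3 * 2"
    using pi_less_4 by (intro mult_left_mono) auto
  finally show ?thesis using std_normal_cdf_taylor[of c] by simp
qed

section \<open>Gaussian half-planes\<close>

lemma normal_density_affine_eq:
  assumes "0 < \<sigma>" "c \<noteq> 0"
  shows "\<bar>c\<bar> * normal_density (c * \<mu> + e) (\<bar>c\<bar> * \<sigma>) (e + c * y) = normal_density \<mu> \<sigma> y"
  using assms by (simp add: normal_density_def real_sqrt_mult field_simps power2_eq_square)

lemma nn_integral_normal_density_halfline:
  assumes "0 < \<sigma>" "c \<noteq> 0"
  shows "(\<integral>\<^sup>+y. ennreal (normal_density \<mu> \<sigma> y) * indicator {y. c*y + e < m} y \<partial>lborel)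
       = (\<integral>\<^sup>+z. ennreal (normal_density (c * \<mu> + e) (\<bar>c\<bar> * \<sigma>) z) * indicator {..<m} z \<partial>lborel)"
proof -
  have "(\<integral>\<^sup>+z. ennreal (normal_density (c * \<mu> + e) (\<bar>c\<bar> * \<sigma>) z) * indicator {..<m} z \<partial>lborel)
     = ennreal \<bar>c\<bar> * (\<integral>\<^sup>+y. ennreal (normal_density (c * \<mu> + e) (\<bar>c\<bar> * \<sigma>) (e + c * y))
          * indicator {..<m} (e + c*y) \<partial>lborel)"
    by (rule nn_integral_real_affine) (use assms in auto)
  also have "\<dots> = (\<integral>\<^sup>+y. ennreal \<bar>c\<bar> * (ennreal (normal_density (c * \<mu> + e) (\<bar>c\<bar> * \<sigma>) (e + c * y))
          * indicator {..<m} (e + c*y)) \<partial>lborel)"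
    by (rule nn_integral_cmult[symmetric]) auto
  also have "\<dots> = (\<integral>\<^sup>+y. ennreal (normal_density \<mu> \<sigma> y) * indicator {y. c*y + e < m} y \<partial>lborel)"
  proof (intro nn_integral_cong)
    fix y
    have "ennreal \<bar>c\<bar> * ennreal (normal_density (c * \<mu> + e) (\<bar>c\<bar> * \<sigma>) (e + c * y))
        = ennreal (normal_density \<mu> \<sigma> y)"
      using normal_density_affine_eq[OF assms, of \<mu> e y] by (simp add: ennreal_mult[symmetric])
    then show "ennreal \<bar>c\<bar> * (ennreal (normal_density (c * \<mu> + e) (\<bar>c\<bar> * \<sigma>) (e + c * y))
          * indicator {..<m} (e + c*y))
        = ennreal (normal_density \<mu> \<sigma> y) * indicator {y. c*y + e < m} y"
      by (simp add: indicator_def mult.assoc[symmetric] add.commute)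
  qed
  finally show ?thesis ..
qed

lemma nn_integral_normal_density_lessThan:
  assumes "0 < \<sigma>"
  shows "(\<integral>\<^sup>+z. ennreal (normal_density 0 \<sigma> z) * indicator {..<m} z \<partial>lborel)
       = ennreal (std_normal_cdf (m / \<sigma>))"
proof -
  have "(\<integral>\<^sup>+z. ennreal (normal_density 0 \<sigma> z) * indicator {..<m} z \<partial>lborel)
      = (\<integral>\<^sup>+z. ennreal (normal_density (\<sigma> * 0 + 0) (\<bar>\<sigma>\<bar> * 1) z) * indicator {..<m} z \<partial>lborel)"
    using assms by simp
  also have "\<dots> = (\<integral>\<^sup>+y. ennreal (std_normal_density y) * indicator {y. \<sigma>*y + 0 < m} y \<partial>lborel)"
    by (rule nn_integral_normal_density_halfline[symmetric]) (use assms in auto)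
  also have "\<dots> = (\<integral>\<^sup>+y. ennreal (std_normal_density y) * indicator {..<m/\<sigma>} y \<partial>lborel)"
    using assms by (intro nn_integral_cong) (auto simp: indicator_def field_simps)
  finally show ?thesis by (simp add: nn_integral_std_normal_lessThan)
qed

lemma nn_integral_normal_density: "0 < \<sigma> \<Longrightarrow> (\<integral>\<^sup>+x. ennreal (normal_density \<mu> \<sigma> x) \<partial>lborel) = 1"
  by (subst nn_integral_eq_integral) auto

text \<open>The left-hand side is the density of \<open>\<alpha> X + Y\<close> for independent \<open>X \<sim> N(0, \<sigma>\<^sup>2)\<close>, \<open>Y \<sim> N(0, \<tau>\<^sup>2)\<close>.\<close>
lemma nn_integral_normal_density_mixture:
  assumes "0 < \<sigma>" "0 < \<tau>"
  shows "(\<integral>\<^sup>+x. ennreal (normal_density 0 \<sigma> x * normal_density 0 \<tau> (z - \<alpha> * x)) \<partial>lborel)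
       = ennreal (normal_density 0 (sqrt (\<tau>^2 + (\<alpha> * \<sigma>)^2)) z)"
proof (cases "\<alpha> = 0")
  case True
  have "(\<integral>\<^sup>+x. ennreal (normal_density 0 \<sigma> x * normal_density 0 \<tau> (z - \<alpha> * x)) \<partial>lborel)
      = (\<integral>\<^sup>+x. ennreal (normal_density 0 \<sigma> x) * ennreal (normal_density 0 \<tau> z) \<partial>lborel)"
    using True by (simp add: ennreal_mult)
  also have "\<dots> = (\<integral>\<^sup>+x. ennreal (normal_density 0 \<sigma> x) \<partial>lborel) * ennreal (normal_density 0 \<tau> z)"
    by (rule nn_integral_multc) simp
  finally show ?thesis
    using True assms by (simp add: nn_integral_normal_density)
next
  case False
  have "(\<integral>\<^sup>+x. ennreal (normal_density 0 \<sigma> x * normal_density 0 \<tau> (z - \<alpha> * x)) \<partial>lborel)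
      = ennreal \<bar>1/\<alpha>\<bar> * (\<integral>\<^sup>+y. ennreal (normal_density 0 \<sigma> (0 + 1/\<alpha> * y)
          * normal_density 0 \<tau> (z - \<alpha> * (0 + 1/\<alpha> * y))) \<partial>lborel)"
    by (rule nn_integral_real_affine) (use False in auto)
  also have "\<dots> = (\<integral>\<^sup>+y. ennreal \<bar>1/\<alpha>\<bar> * ennreal (normal_density 0 \<sigma> (0 + 1/\<alpha> * y)
          * normal_density 0 \<tau> (z - \<alpha> * (0 + 1/\<alpha> * y))) \<partial>lborel)"
    by (rule nn_integral_cmult[symmetric]) auto
  also have "\<dots> = (\<integral>\<^sup>+y. ennreal (normal_density 0 \<tau> (z - y) * normal_density 0 (\<bar>\<alpha>\<bar> * \<sigma>) y) \<partial>lborel)"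
  proof (intro nn_integral_cong)
    fix y
    have "\<bar>\<alpha>\<bar> * normal_density (\<alpha> * 0 + 0) (\<bar>\<alpha>\<bar> * \<sigma>) (0 + \<alpha> * (y/\<alpha>)) = normal_density 0 \<sigma> (y/\<alpha>)"
      by (rule normal_density_affine_eq) (use assms False in auto)
    then have "\<bar>1/\<alpha>\<bar> * normal_density 0 \<sigma> (y/\<alpha>) = normal_density 0 (\<bar>\<alpha>\<bar> * \<sigma>) y"
      using False by (auto simp: field_simps abs_mult)
    then show "ennreal \<bar>1/\<alpha>\<bar> * ennreal (normal_density 0 \<sigma> (0 + 1/\<alpha> * y)
          * normal_density 0 \<tau> (z - \<alpha> * (0 + 1/\<alpha> * y)))
        = ennreal (normal_density 0 \<tau> (z - y) * normal_density 0 (\<bar>\<alpha>\<bar> * \<sigma>) y)"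
      using False by (simp add: ennreal_mult[symmetric] mult.assoc[symmetric])
  qed
  also have "\<dots> = ennreal (normal_density 0 (sqrt (\<tau>^2 + (\<bar>\<alpha>\<bar> * \<sigma>)^2)) z)"
    using conv_normal_density_zero_mean[of \<tau> "\<bar>\<alpha>\<bar> * \<sigma>"] assms False by (simp add: fun_eq_iff)
  finally show ?thesis by (simp add: power_mult_distrib)
qed

lemma bvn_density_factor:
  assumes sx: "sx > 0" and sy: "sy > 0" and r: "-1 < r" "r < 1"
  shows "bvn_density sx sy r (x, y) =
     normal_density 0 sx x * normal_density (r * sy/sx * x) (sy * sqrt (1 - r^2)) y"
proof -
  define k where "k = sqrt (1 - r^2)"
  have rr: "r^2 < 1" using r by (simp add: abs_square_less_1)
  have k: "k > 0" "k^2 = 1 - r^2" using rr unfolding k_def by auto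
  have s1: "sqrt (2 * pi * sx\<^sup>2) = sqrt (2*pi) * sx" using sx by (simp add: real_sqrt_mult)
  have s2: "sqrt (2 * pi * (sy * k)\<^sup>2) = sqrt (2*pi) * (sy * k)" using sy k by (simp add: real_sqrt_mult)
  have exponent: "- (1 / (2 * (1 - r\<^sup>2))) * (x\<^sup>2 / sx\<^sup>2 - 2 * r * x * y / (sx * sy) + y\<^sup>2 / sy\<^sup>2)
      = - (x - 0)\<^sup>2 / (2 * sx\<^sup>2) + - (y - r * sy / sx * x)\<^sup>2 / (2 * (sy * k)\<^sup>2)"
  proof -
    have e: "(sy * k)^2 = sy^2 * (1 - r^2)" using k by (simp add: power_mult_distrib)
    have "1 - r^2 > 0" using rr by simp
    then show ?thesis unfolding e using sx sy by (simp add: field_simps power2_eq_square)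
  qed
  have "normal_density 0 sx x * normal_density (r * sy/sx * x) (sy * k) y
     = exp (- (x - 0)\<^sup>2 / (2 * sx\<^sup>2) + - (y - r * sy / sx * x)\<^sup>2 / (2 * (sy * k)\<^sup>2)) / (2 * pi * sx * sy * k)"
    unfolding normal_density_def s1 s2 mult_exp_exp[symmetric]
    using sx sy k by (simp add: field_simps)
  also have "\<dots> = bvn_density sx sy r (x, y)"
    unfolding bvn_density_def fst_conv snd_conv exponent k_def[symmetric] by simp
  finally show ?thesis unfolding k_def ..
qed

lemma borel_measurable_bvn_density [measurable]: "bvn_density sx sy r \<in> borel_measurable borel"
proof -
  have "(\<lambda>z. bvn_density sx sy r z) \<in> borel_measurable (borel \<Otimes>\<^sub>M borel)"
    unfolding bvn_density_def by measurable
  then show ?thesis by (simp add: borel_prod)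
qed

lemma emeasure_bvn_iterated:
  assumes sx: "sx > 0" and sy: "sy > 0" and r: "-1 < r" "r < 1"
    and [measurable]: "A \<in> sets borel"
  shows "emeasure (bvn sx sy r) A = (\<integral>\<^sup>+x. ennreal (normal_density 0 sx x) *
      (\<integral>\<^sup>+y. ennreal (normal_density (r * sy/sx * x) (sy * sqrt (1 - r^2)) y) * indicator A (x, y)
        \<partial>lborel) \<partial>lborel)"
proof -
  have "emeasure (bvn sx sy r) A = (\<integral>\<^sup>+z. ennreal (bvn_density sx sy r z) * indicator A z \<partial>lborel)"
    unfolding bvn_def by (simp add: emeasure_density)
  also have "\<dots> = (\<integral>\<^sup>+z. ennreal (bvn_density sx sy r z) * indicator A z \<partial>(lborel \<Otimes>\<^sub>M lborel))"
    by (simp add: lborel_prod)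
  also have "\<dots> = (\<integral>\<^sup>+x. \<integral>\<^sup>+y. ennreal (bvn_density sx sy r (x,y)) * indicator A (x,y) \<partial>lborel \<partial>lborel)"
    by (rule lborel.nn_integral_fst[symmetric]) (unfold lborel_prod, measurable)
  finally show ?thesis
    by (simp add: bvn_density_factor[OF sx sy r] ennreal_mult mult.assoc nn_integral_cmult[symmetric])
qed

text \<open>\<open>cov_form sx sy r u1 u2\<close> is the variance of \<open>u1 \<xi> + u2 \<eta>\<close>.\<close>
definition cov_form :: "real \<Rightarrow> real \<Rightarrow> real \<Rightarrow> real \<Rightarrow> real \<Rightarrow> real" where
  "cov_form sx sy r u1 u2 = sx^2 * u1^2 + 2 * r * sx * sy * u1 * u2 + sy^2 * u2^2"

lemma cov_form_pos:
  assumes "sx > 0" "sy > 0" "-1 < r" "r < 1" "u1 \<noteq> 0 \<or> u2 \<noteq> 0"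
  shows "cov_form sx sy r u1 u2 > 0"
proof -
  have rr: "r^2 < 1" using assms by (simp add: abs_square_less_1)
  have sos: "cov_form sx sy r u1 u2 = (sx * u1 + r * sy * u2)^2 + (1 - r^2) * (sy * u2)^2"
    unfolding cov_form_def by (simp add: power2_eq_square algebra_simps)
  show ?thesis
  proof (cases "u2 = 0")
    case True
    then show ?thesis using assms unfolding sos by simp
  next
    case False
    then have "(1 - r^2) * (sy * u2)^2 > 0" using rr assms by simp
    then show ?thesis unfolding sos by (simp add: add_nonneg_pos)
  qed
qed

lemma cov_form_uminus: "cov_form sx sy r (-u1) (-u2) = cov_form sx sy r u1 u2"
  unfolding cov_form_def by simp

lemma cov_form_scale: "cov_form sx sy r (s*u1) (s*u2) = s^2 * cov_form sx sy r u1 u2"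
  unfolding cov_form_def by (simp add: power_mult_distrib algebra_simps power2_eq_square)

lemma nn_integral_normal_mixture_lessThan:
  assumes "0 < \<sigma>" "0 < \<tau>"
  shows "(\<integral>\<^sup>+x. ennreal (normal_density 0 \<sigma> x) *
          (\<integral>\<^sup>+z. ennreal (normal_density 0 \<tau> (z - \<alpha> * x)) * indicator {..<m} z \<partial>lborel) \<partial>lborel)
       = ennreal (std_normal_cdf (m / sqrt (\<tau>^2 + (\<alpha> * \<sigma>)^2)))"
proof -
  have "(\<integral>\<^sup>+x. ennreal (normal_density 0 \<sigma> x) *
          (\<integral>\<^sup>+z. ennreal (normal_density 0 \<tau> (z - \<alpha> * x)) * indicator {..<m} z \<partial>lborel) \<partial>lborel)
      = (\<integral>\<^sup>+x. \<integral>\<^sup>+z. ennreal (normal_density 0 \<sigma> x * normal_density 0 \<tau> (z - \<alpha> * x))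
          * indicator {..<m} z \<partial>lborel \<partial>lborel)"
    by (intro nn_integral_cong) (simp add: nn_integral_cmult[symmetric] ennreal_mult mult.assoc)
  also have "\<dots> = (\<integral>\<^sup>+z. \<integral>\<^sup>+x. ennreal (normal_density 0 \<sigma> x * normal_density 0 \<tau> (z - \<alpha> * x))
          * indicator {..<m} z \<partial>lborel \<partial>lborel)"
    by (rule lborel_pair.Fubini'[symmetric]) simp
  also have "\<dots> = (\<integral>\<^sup>+z. ennreal (normal_density 0 (sqrt (\<tau>^2 + (\<alpha> * \<sigma>)^2)) z) * indicator {..<m} z \<partial>lborel)"
    using nn_integral_normal_density_mixture[OF assms]
    by (intro nn_integral_cong) (simp add: nn_integral_multc)
  also have "\<dots> = ennreal (std_normal_cdf (m / sqrt (\<tau>^2 + (\<alpha> * \<sigma>)^2)))"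
    using assms by (intro nn_integral_normal_density_lessThan) (simp add: add_pos_nonneg)
  finally show ?thesis .
qed

lemma emeasure_bvn_halfplane:
  assumes sx: "sx > 0" and sy: "sy > 0" and r: "-1 < r" "r < 1" and u: "u1 \<noteq> 0 \<or> u2 \<noteq> 0"
  shows "emeasure (bvn sx sy r) {z. u1 * fst z + u2 * snd z < m}
       = ennreal (std_normal_cdf (m / sqrt (cov_form sx sy r u1 u2)))"
proof -
  define \<beta> where "\<beta> = r * sy / sx"
  define \<sigma>' where "\<sigma>' = sy * sqrt (1 - r^2)"
  have rr: "r^2 < 1" using r by (simp add: abs_square_less_1)
  have \<sigma>': "\<sigma>' > 0" using sy rr by (simp add: \<sigma>'_def)
  have "open {z::real\<times>real. u1 * fst z + u2 * snd z < m}"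
    by (intro open_Collect_less continuous_intros)
  then have "emeasure (bvn sx sy r) {z. u1 * fst z + u2 * snd z < m} = (\<integral>\<^sup>+x. ennreal (normal_density 0 sx x) *
        (\<integral>\<^sup>+y. ennreal (normal_density (\<beta> * x) \<sigma>' y) * indicator {y. u2 * y + u1 * x < m} y \<partial>lborel) \<partial>lborel)"
    unfolding \<beta>_def \<sigma>'_def
    by (simp add: emeasure_bvn_iterated[OF sx sy r] borel_open indicator_def add.commute)
  also have "\<dots> = ennreal (std_normal_cdf (m / sqrt (cov_form sx sy r u1 u2)))"
  proof (cases "u2 = 0")
    case True
    then have u1: "u1 \<noteq> 0" using u by simp
    have "sqrt (cov_form sx sy r u1 u2) = \<bar>u1\<bar> * sx"
      using True sx by (simp add: cov_form_def power_mult_distrib[symmetric] real_sqrt_abs abs_mult)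
    moreover have "(\<integral>\<^sup>+x. ennreal (normal_density 0 sx x) * (\<integral>\<^sup>+y. ennreal (normal_density (\<beta> * x) \<sigma>' y)
          * indicator {y. u2 * y + u1 * x < m} y \<partial>lborel) \<partial>lborel)
      = (\<integral>\<^sup>+x. ennreal (normal_density 0 sx x) * indicator {x. u1 * x + 0 < m} x \<partial>lborel)"
      using True \<sigma>' by (intro nn_integral_cong) (auto simp: indicator_def nn_integral_normal_density)
    ultimately show ?thesis
      using nn_integral_normal_density_halfline[of sx u1 0 0 m] nn_integral_normal_density_lessThan[of "\<bar>u1\<bar> * sx" m]
        sx u1 by simp
  next
    case False
    define \<alpha> where "\<alpha> = u1 + u2 * \<beta>"
    define \<tau> where "\<tau> = \<bar>u2\<bar> * \<sigma>'"
    have \<tau>: "\<tau> > 0" using False \<sigma>' by (simp add: \<tau>_def)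
    have "\<tau>^2 + (\<alpha> * sx)^2 = cov_form sx sy r u1 u2"
      using sx rr unfolding \<tau>_def \<alpha>_def \<beta>_def \<sigma>'_def cov_form_def
      by (simp add: power_mult_distrib field_simps power2_eq_square)
    moreover have "(\<integral>\<^sup>+y. ennreal (normal_density (\<beta> * x) \<sigma>' y) * indicator {y. u2 * y + u1 * x < m} y \<partial>lborel)
        = (\<integral>\<^sup>+z. ennreal (normal_density 0 \<tau> (z - \<alpha> * x)) * indicator {..<m} z \<partial>lborel)" for x
      using nn_integral_normal_density_halfline[OF \<sigma>' False, of "\<beta> * x" "u1 * x" m]
      by (simp add: normal_density_def \<tau>_def \<alpha>_def algebra_simps)
    ultimately show ?thesis
      using nn_integral_normal_mixture_lessThan[OF sx \<tau>, of \<alpha> m] by simp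
  qed
  finally show ?thesis .
qed

section \<open>The payoff in terms of the normal distribution function\<close>

text \<open>\<open>C1 a b\<close> is the half-plane \<open>\<langle>b - a, z\<rangle> < bisector_offset a b\<close>.\<close>
definition bisector_offset :: "real \<times> real \<Rightarrow> real \<times> real \<Rightarrow> real" where
  "bisector_offset a b = ((fst b)^2 + (snd b)^2 - (fst a)^2 - (snd a)^2) / 2"

definition payoff_threshold :: "real \<Rightarrow> real \<Rightarrow> real \<Rightarrow> real \<times> real \<Rightarrow> real \<times> real \<Rightarrow> real" where
  "payoff_threshold sx sy r a b =
     bisector_offset a b / sqrt (cov_form sx sy r (fst b - fst a) (snd b - snd a))"

lemma Kpay_eq_std_normal_cdf:
  assumes sx: "sx > 0" and sy: "sy > 0" and r: "-1 < r" "r < 1" and ab: "a \<noteq> b"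
  defines "c \<equiv> payoff_threshold sx sy r a b"
  shows "Kpay sx sy r a b = (fst a + snd a) * std_normal_cdf c + (fst b + snd b) * std_normal_cdf (- c)"
proof -
  obtain a1 a2 b1 b2 where a: "a = (a1, a2)" and b: "b = (b1, b2)" by fastforce
  define u1 where "u1 = b1 - a1"
  define u2 where "u2 = b2 - a2"
  have u: "u1 \<noteq> 0 \<or> u2 \<noteq> 0" "-u1 \<noteq> 0 \<or> -u2 \<noteq> 0" using ab unfolding a b u1_def u2_def by auto
  have C1_halfplane: "C1 a b = {z. u1 * fst z + u2 * snd z < bisector_offset a b}"
    unfolding C1_def bisector_offset_def a b u1_def u2_def by (auto simp: power2_eq_square algebra_simps)
  have P1: "measure (bvn sx sy r) (C1 a b) = std_normal_cdf c"
    unfolding measure_def C1_halfplane emeasure_bvn_halfplane[OF sx sy r u(1)] c_def payoff_threshold_def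
    by (simp add: std_normal_cdf_nonneg a b u1_def u2_def)
  have C2_halfplane: "C2 a b = {z. (-u1) * fst z + (-u2) * snd z < - bisector_offset a b}"
    unfolding C2_def bisector_offset_def a b u1_def u2_def by (auto simp: power2_eq_square field_simps)
  have P2: "measure (bvn sx sy r) (C2 a b) = std_normal_cdf (- c)"
    unfolding measure_def C2_halfplane emeasure_bvn_halfplane[OF sx sy r u(2)] c_def payoff_threshold_def cov_form_uminus
    by (simp add: std_normal_cdf_nonneg a b u1_def u2_def)
  show ?thesis unfolding Kpay_def using ab P1 P2 by simp
qed

lemma Kpay_antisym:
  assumes sx: "sx > 0" and sy: "sy > 0" and r: "-1 < r" "r < 1"
  shows "Kpay sx sy r (- b) (- a) = - Kpay sx sy r a b"
proof (cases "a = b")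
  case True
  then show ?thesis unfolding Kpay_def by simp
next
  case False
  then have "-b \<noteq> -a" by simp
  moreover have "payoff_threshold sx sy r (-b) (-a) = - payoff_threshold sx sy r a b"
    unfolding payoff_threshold_def bisector_offset_def
    by (simp add: cov_form_def power2_eq_square algebra_simps minus_divide_left)
  ultimately show ?thesis
    using Kpay_eq_std_normal_cdf[OF sx sy r False] Kpay_eq_std_normal_cdf[OF sx sy r \<open>-b \<noteq> -a\<close>]
    by (simp add: algebra_simps)
qed

section \<open>A second-order expansion\<close>

lemma inverse_sqrt_expansion:
  fixes y \<epsilon> :: real
  assumes y: "y > 0" "y^2 = 1 + \<epsilon>" and \<epsilon>: "\<bar>\<epsilon>\<bar> \<le> 1/2"
  shows "1/2 \<le> y" and "0 \<le> 1/y - (1 - \<epsilon>/2)" and "1/y - (1 - \<epsilon>/2) \<le> 2 * \<epsilon>^2"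
proof -
  show y_half: "1/2 \<le> y"
  proof (rule ccontr)
    assume "\<not> 1/2 \<le> y"
    then have "y^2 < (1/2)^2" using y by (intro power_strict_mono) auto
    then show False using y \<epsilon> by (simp add: abs_le_iff power2_eq_square)
  qed
  have expand: "1/y - (1 - \<epsilon>/2) = \<epsilon>^2 * ((y+2) / (2*y*(y+1)^2))"
  proof -
    have \<epsilon>_eq: "\<epsilon> = (y-1)*(y+1)" using y by (simp add: algebra_simps power2_eq_square)
    have "(1/y - (1 - \<epsilon>/2)) * (2*y*(y+1)^2) = \<epsilon>^2 * (y+2)"
      unfolding \<epsilon>_eq using y(1) by (simp add: field_simps power2_eq_square)
    moreover have "2*y*(y+1)^2 \<noteq> 0" using y by simp
    ultimately have "1/y - (1 - \<epsilon>/2) = \<epsilon>^2 * (y+2) / (2*y*(y+1)^2)"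
      by (simp add: eq_divide_eq)
    then show ?thesis by simp
  qed
  have factor_le: "(y+2) / (2*y*(y+1)^2) \<le> 2"
  proof -
    have "(3/2)^2 \<le> (y+1)^2" by (rule power_mono) (use y_half in auto)
    then have "4*y*(9/4) \<le> 4*y*(y+1)^2" using y by (intro mult_left_mono) (auto simp: power_divide)
    then have "y + 2 \<le> 2 * (2*y*(y+1)^2)" using y_half by linarith
    then show ?thesis using y by (simp add: divide_le_eq)
  qed
  then show "1/y - (1 - \<epsilon>/2) \<le> 2 * \<epsilon>^2"
    unfolding expand using mult_left_mono[OF factor_le, of "\<epsilon>^2"] by (simp add: mult.commute)
  show "0 \<le> 1/y - (1 - \<epsilon>/2)" unfolding expand using y by simp
qed

lemma abs_le_of_sum_squares:
  fixes p q r :: real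
  assumes "p^2 + q^2 = r^2" and "0 \<le> r"
  shows "\<bar>p\<bar> \<le> r" and "\<bar>q\<bar> \<le> r"
proof -
  have "p^2 \<le> r^2" "q^2 \<le> r^2" using assms(1) zero_le_power2[of p] zero_le_power2[of q] by linarith+
  then show "\<bar>p\<bar> \<le> r" "\<bar>q\<bar> \<le> r" using power2_le_iff_abs_le[OF assms(2)] by blast+
qed

lemma form_term_bounds:
  fixes A B C p q r :: real
  assumes pq: "p^2 + q^2 = r^2" and r: "0 \<le> r"
  shows "\<bar>A*p + C*(p+q) + B*q\<bar> \<le> 2 * (\<bar>A\<bar> + \<bar>B\<bar> + \<bar>C\<bar>) * r"
    and "\<bar>A*p^2 + 2*C*p*q + B*q^2\<bar> \<le> (\<bar>A\<bar> + \<bar>B\<bar> + \<bar>C\<bar>) * r^2"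
proof -
  have p2: "p^2 \<le> r^2" and q2: "q^2 \<le> r^2" using pq zero_le_power2[of p] zero_le_power2[of q] by linarith+
  have p: "\<bar>p\<bar> \<le> r" and q: "\<bar>q\<bar> \<le> r" using abs_le_of_sum_squares[OF pq r] by auto
  have "\<bar>A*p + C*(p+q) + B*q\<bar> \<le> \<bar>A\<bar>*\<bar>p\<bar> + \<bar>C\<bar>*(\<bar>p\<bar>+\<bar>q\<bar>) + \<bar>B\<bar>*\<bar>q\<bar>"
    using abs_triangle_ineq[of "A*p + C*(p+q)" "B*q"] abs_triangle_ineq[of "A*p" "C*(p+q)"]
      abs_triangle_ineq[of p q] mult_left_mono[of "\<bar>p+q\<bar>" "\<bar>p\<bar>+\<bar>q\<bar>" "\<bar>C\<bar>"]
    by (simp add: abs_mult)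
  also have "\<dots> \<le> \<bar>A\<bar>*r + \<bar>C\<bar>*(r+r) + \<bar>B\<bar>*r"
    using p q by (intro add_mono mult_left_mono) auto
  also have "\<dots> \<le> 2 * (\<bar>A\<bar> + \<bar>B\<bar> + \<bar>C\<bar>) * r"
    using r by (simp add: algebra_simps mult_right_mono)
  finally show "\<bar>A*p + C*(p+q) + B*q\<bar> \<le> 2 * (\<bar>A\<bar> + \<bar>B\<bar> + \<bar>C\<bar>) * r" .
  have "2*\<bar>p*q\<bar> \<le> r^2"
    using pq sum_squares_bound[of "\<bar>p\<bar>" "\<bar>q\<bar>"] by (simp add: abs_mult power2_abs)
  then have "\<bar>A*p^2 + 2*C*p*q + B*q^2\<bar> \<le> \<bar>A\<bar>*p^2 + \<bar>C\<bar>*r^2 + \<bar>B\<bar>*q^2"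
    using abs_triangle_ineq[of "A*p^2 + 2*C*p*q" "B*q^2"] abs_triangle_ineq[of "A*p^2" "2*C*p*q"]
      mult_left_mono[of "2*\<bar>p*q\<bar>" "r^2" "\<bar>C\<bar>"]
    by (simp add: abs_mult mult.assoc)
  also have "\<dots> \<le> \<bar>A\<bar>*r^2 + \<bar>C\<bar>*r^2 + \<bar>B\<bar>*r^2"
    using p2 q2 by (intro add_mono mult_left_mono) auto
  finally show "\<bar>A*p^2 + 2*C*p*q + B*q^2\<bar> \<le> (\<bar>A\<bar> + \<bar>B\<bar> + \<bar>C\<bar>) * r^2"
    by (simp add: algebra_simps)
qed

lemma abs_mult_le_mult: "\<bar>x\<bar> \<le> a \<Longrightarrow> \<bar>y\<bar> \<le> b \<Longrightarrow> \<bar>x * y :: real\<bar> \<le> a * b"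
  by (simp add: abs_mult mult_mono')

lemma cubic_remainder_bound:
  fixes w n l Qd e R r \<Lambda> :: real
  assumes r: "0 \<le> r" "r \<le> 1" and \<Lambda>: "0 \<le> \<Lambda>"
    and w: "\<bar>w\<bar> \<le> 2*r" and n: "\<bar>n\<bar> \<le> 3*r" and l: "\<bar>l\<bar> \<le> 2*\<Lambda>*r" and Qd: "\<bar>Qd\<bar> \<le> \<Lambda>*r^2"
    and e: "\<bar>e\<bar> \<le> 18*\<Lambda>^2*r^2" and R: "\<bar>R\<bar> \<le> r^3"
  shows "\<bar>w^3/(32*(4-w)) + w*Qd/64 + r^2*l/32 - r^2*Qd/128 - n*e/8\<bar> + \<bar>R\<bar> \<le> (2 + \<Lambda> + 7*\<Lambda>^2) * r^3"
proof -
  have r43: "r^4 \<le> r^3" using r by (simp add: power_decreasing)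
  have w4: "2 \<le> 4 - w" using w r by simp
  have "\<bar>w^3/(32*(4-w))\<bar> = \<bar>w\<bar>^3 / (32*(4-w))" using w4 by (simp add: abs_mult power_abs)
  also have "\<dots> \<le> \<bar>w\<bar>^3 / 64" using w4 by (intro divide_left_mono) auto
  also have "\<dots> \<le> (2*r)^3 / 64" using w by (intro divide_right_mono power_mono) auto
  finally have t1: "\<bar>w^3/(32*(4-w))\<bar> \<le> r^3/8" by (simp add: power_mult_distrib)
  have t2: "\<bar>w*Qd/64\<bar> \<le> \<Lambda>*r^3/32"
    using abs_mult_le_mult[OF w Qd] by (simp add: power3_eq_cube power2_eq_square algebra_simps)
  have t3: "\<bar>r^2*l/32\<bar> \<le> \<Lambda>*r^3/16"
    using abs_mult_le_mult[of "r^2" "r^2" l, OF _ l] by (simp add: power3_eq_cube power2_eq_square algebra_simps)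
  have "\<bar>r^2*Qd\<bar> \<le> \<Lambda>*r^4"
    using abs_mult_le_mult[of "r^2" "r^2" Qd, OF _ Qd] by (simp add: power2_eq_square power4_eq_xxxx algebra_simps)
  then have t4: "\<bar>r^2*Qd/128\<bar> \<le> \<Lambda>*r^3/128"
    using mult_left_mono[OF r43 \<Lambda>] by simp
  have "\<bar>n*e\<bar> \<le> (3*r)*(18*\<Lambda>^2*r^2)" by (rule abs_mult_le_mult[OF n e])
  moreover have "(3*r)*(18*\<Lambda>^2*r^2) = 54*(\<Lambda>^2*r^3)" by (simp add: power3_eq_cube power2_eq_square)
  moreover have "0 \<le> \<Lambda>^2*r^3" using r by simp
  ultimately have t5: "\<bar>n*e/8\<bar> \<le> 7*\<Lambda>^2*r^3" by simp
  have "\<bar>w^3/(32*(4-w)) + w*Qd/64 + r^2*l/32 - r^2*Qd/128 - n*e/8\<bar>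
      \<le> \<bar>w^3/(32*(4-w))\<bar> + \<bar>w*Qd/64\<bar> + \<bar>r^2*l/32\<bar> + \<bar>r^2*Qd/128\<bar> + \<bar>n*e/8\<bar>"
    by linarith
  also have "\<dots> \<le> r^3/8 + \<Lambda>*r^3/32 + \<Lambda>*r^3/16 + \<Lambda>*r^3/128 + 7*\<Lambda>^2*r^3"
    using t1 t2 t3 t4 t5 by linarith
  also have "\<dots> + r^3 \<le> (2 + \<Lambda> + 7*\<Lambda>^2) * r^3"
  proof -
    have "(2 + \<Lambda> + 7*\<Lambda>^2) * r^3 - (r^3/8 + \<Lambda>*r^3/32 + \<Lambda>*r^3/16 + \<Lambda>*r^3/128 + 7*\<Lambda>^2*r^3 + r^3)
        = 7/8*r^3 + 115/128*(\<Lambda>*r^3)"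
      by (simp add: algebra_simps)
    moreover have "0 \<le> r^3" "0 \<le> \<Lambda>*r^3" using r \<Lambda> by auto
    ultimately show ?thesis by linarith
  qed
  finally show ?thesis using R by linarith
qed

text \<open>The remainder is built from \<open>1/y \<approx> 1 - \<epsilon>/2\<close> with \<open>\<epsilon> = Qd/4 - l\<close>, which is \<open>y\<^sup>2 - 1\<close> where
  the identity is applied; the mixed terms \<open>p q\<close> of the quadratic part cancel because \<open>A + 2 C + B = 1\<close>.\<close>
lemma second_order_expansion_identity:
  fixes A B C p q y :: real
  assumes ABC: "A + 2*C + B = 1" and "p + q \<noteq> 4" and "y \<noteq> 0"
  defines "w \<equiv> p + q" and "l \<equiv> A*p + C*(p+q) + B*q" and "Qd \<equiv> A*p^2 + 2*C*p*q + B*q^2"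
    and "n \<equiv> p + q - (p^2+q^2)/2"
  shows "w/(2*(4-w)) - n/(8*y) = ((A + 4*C + 3*B) * p^2 + (3*A + 4*C + B) * q^2) / 32
      + (w^3/(32*(4-w)) + w*Qd/64 + (p^2+q^2)*l/32 - (p^2+q^2)*Qd/128
         - n*(1/y - (1 - (Qd/4 - l)/2))/8)"
proof -
  define r2 where "r2 = p^2 + q^2"
  have quadratic_part: "((A + 4*C + 3*B) * p^2 + (3*A + 4*C + B) * q^2) / 32 = w^2/32 + r2/16 - w*l/16"
  proof -
    have A: "A = 1 - 2*C - B" using ABC by linarith
    show ?thesis unfolding A w_def l_def r2_def by (simp add: field_simps power2_eq_square)
  qed
  have "n/(8*y) = n*(1 - (Qd/4 - l)/2)/8 + n*(1/y - (1 - (Qd/4 - l)/2))/8"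
    using \<open>y \<noteq> 0\<close> by (simp add: field_simps)
  moreover have "w/(2*(4-w)) - (w - r2/2)*(1 - (Qd/4 - l)/2)/8
      = (w^2/32 + r2/16 - w*l/16) + (w^3/(32*(4-w)) + w*Qd/64 + r2*l/32 - r2*Qd/128)"
    using assms(2) unfolding w_def by (simp add: field_simps power2_eq_square power3_eq_cube)
  ultimately show ?thesis
    unfolding quadratic_part by (simp add: n_def r2_def w_def)
qed

lemma second_order_expansion:
  fixes A B C p q y R r :: real
  defines "\<Lambda> \<equiv> \<bar>A\<bar> + \<bar>B\<bar> + \<bar>C\<bar>"
  assumes ABC: "A + 2*C + B = 1"
    and pq: "p^2 + q^2 = r^2" and r: "0 \<le> r" "r * (6*\<Lambda> + 6) \<le> 1"
    and y: "y > 0" "y^2 = 1 - (A*p + C*(p+q) + B*q) + (A*p^2 + 2*C*p*q + B*q^2)/4"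
    and R: "\<bar>R\<bar> \<le> 2 * \<bar>(p + q - (p^2+q^2)/2) / (8*y)\<bar>^3"
  shows "\<bar>(p+q)/(2*(4-(p+q))) - (p + q - (p^2+q^2)/2)/(8*y) - R
          - ((A + 4*C + 3*B) * p^2 + (3*A + 4*C + B) * q^2) / 32\<bar> \<le> (2 + \<Lambda> + 7*\<Lambda>^2) * r^3"
proof -
  define l where "l = A*p + C*(p+q) + B*q"
  define Qd where "Qd = A*p^2 + 2*C*p*q + B*q^2"
  define n where "n = p + q - (p^2+q^2)/2"
  define \<epsilon> where "\<epsilon> = Qd/4 - l"
  have \<Lambda>: "0 \<le> \<Lambda>" unfolding \<Lambda>_def by simp
  have r1: "r \<le> 1" using mult_left_mono[of 1 "6*\<Lambda>+6" r] r \<Lambda> by linarith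
  have l: "\<bar>l\<bar> \<le> 2*\<Lambda>*r" and Qd: "\<bar>Qd\<bar> \<le> \<Lambda>*r^2"
    using form_term_bounds[OF pq r(1)] unfolding l_def Qd_def \<Lambda>_def by auto
  have "\<Lambda>*r^2 \<le> \<Lambda>*r" using r r1 \<Lambda> by (simp add: mult_left_mono power2_eq_square mult_left_le)
  then have \<epsilon>: "\<bar>\<epsilon>\<bar> \<le> 3*\<Lambda>*r" using l Qd unfolding \<epsilon>_def by linarith
  then have \<epsilon>_half: "\<bar>\<epsilon>\<bar> \<le> 1/2" using r by (simp add: algebra_simps)
  have y2: "y^2 = 1 + \<epsilon>" using y(2) unfolding \<epsilon>_def l_def Qd_def by simp
  note inv = inverse_sqrt_expansion[OF y(1) y2 \<epsilon>_half]
  have "\<epsilon>^2 \<le> (3*\<Lambda>*r)^2" using \<epsilon> by (metis abs_ge_zero power2_abs power_mono)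
  then have e: "\<bar>1/y - (1 - \<epsilon>/2)\<bar> \<le> 18*\<Lambda>^2*r^2" using inv by (simp add: power_mult_distrib)
  have w: "\<bar>p + q\<bar> \<le> 2*r" using abs_le_of_sum_squares[OF pq r(1)] by simp
  have "r^2 \<le> r" using r r1 by (simp add: power2_eq_square mult_left_le)
  then have n: "\<bar>n\<bar> \<le> 3*r" unfolding n_def pq abs_le_iff using w zero_le_power2[of r] by linarith
  have "\<bar>n / (8*y)\<bar> = \<bar>n\<bar> / (8*y)" using y by simp
  also have "\<dots> \<le> (3*r) / 4" using n inv(1) y by (intro frac_le) auto
  finally have "2 * \<bar>n / (8*y)\<bar>^3 \<le> 2 * ((3*r) / 4)^3" by (intro mult_left_mono power_mono) auto
  then have R': "\<bar>R\<bar> \<le> r^3" using R r unfolding n_def by (simp add: power_divide power_mult_distrib)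
  have "p + q \<noteq> 4" using w r1 by auto
  from second_order_expansion_identity[OF ABC this] y(1)
  have "(p+q)/(2*(4-(p+q))) - n/(8*y) = ((A + 4*C + 3*B) * p^2 + (3*A + 4*C + B) * q^2) / 32
      + ((p+q)^3/(32*(4-(p+q))) + (p+q)*Qd/64 + r^2*l/32 - r^2*Qd/128 - n*(1/y - (1 - \<epsilon>/2))/8)"
    unfolding l_def Qd_def n_def \<epsilon>_def pq by simp
  then show ?thesis
    using cubic_remainder_bound[OF r(1) r1 \<Lambda> w n l Qd e R'] unfolding n_def by linarith
qed

lemma second_order_squeeze:
  fixes A B C :: real
  assumes ABC: "A + 2*C + B = 1" and pos: "A + 4*C + 3*B > 0" "3*A + 4*C + B > 0"
  shows "\<exists>\<delta>>0. \<exists>\<kappa>>0. \<exists>M. \<forall>p q y R. p^2 + q^2 < \<delta>^2 \<longrightarrow> y > 0 \<longrightarrow>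
     y^2 = 1 - (A*p + C*(p+q) + B*q) + (A*p^2 + 2*C*p*q + B*q^2)/4 \<longrightarrow>
     \<bar>R\<bar> \<le> 2 * \<bar>(p + q - (p^2+q^2)/2) / (8*y)\<bar>^3 \<longrightarrow>
     \<kappa> * (p^2+q^2) \<le> (p+q)/(2*(4-(p+q))) - (p + q - (p^2+q^2)/2)/(8*y) - R \<and>
     (p+q)/(2*(4-(p+q))) - (p + q - (p^2+q^2)/2)/(8*y) - R \<le> M * (p^2+q^2)"
proof -
  define \<Lambda> where "\<Lambda> = \<bar>A\<bar> + \<bar>B\<bar> + \<bar>C\<bar>"
  define K where "K = 2 + \<Lambda> + 7*\<Lambda>^2"
  define m where "m = min (A + 4*C + 3*B) (3*A + 4*C + B)"
  define m' where "m' = max (A + 4*C + 3*B) (3*A + 4*C + B)"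
  define \<delta> where "\<delta> = min (1/(6*\<Lambda>+6)) (m/(64*K))"
  have \<Lambda>: "0 \<le> \<Lambda>" and K: "0 < K" and m: "0 < m"
    using pos unfolding \<Lambda>_def K_def m_def by (auto simp: add_pos_nonneg)
  have \<delta>: "0 < \<delta>" unfolding \<delta>_def using \<Lambda> K m by simp
  show ?thesis
  proof (rule exI[of _ \<delta>], rule conjI[OF \<delta>], rule exI[of _ "m/64"], rule conjI, use m in simp,
      rule exI[of _ "m'/32 + K"], intro allI impI)
    fix p q y R
    assume pq: "p^2 + q^2 < \<delta>^2" and y: "y > 0"
      "y^2 = 1 - (A*p + C*(p+q) + B*q) + (A*p^2 + 2*C*p*q + B*q^2)/4"
      and R: "\<bar>R\<bar> \<le> 2 * \<bar>(p + q - (p^2+q^2)/2) / (8*y)\<bar>^3"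
    define r where "r = sqrt (p^2 + q^2)"
    have r: "0 \<le> r" "r^2 = p^2 + q^2" "r < \<delta>"
      unfolding r_def using real_sqrt_less_mono[OF pq] \<delta> by auto
    have r\<Lambda>: "r * (6*\<Lambda> + 6) \<le> 1" and rK: "r * (64*K) \<le> m"
      using r(3) \<Lambda> K unfolding \<delta>_def by (auto simp: field_simps)
    have r1: "r \<le> 1" using mult_left_mono[of 1 "6*\<Lambda>+6" r] r(1) r\<Lambda> \<Lambda> by linarith
    define X where "X = (p+q)/(2*(4-(p+q))) - (p + q - (p^2+q^2)/2)/(8*y) - R"
    define Q where "Q = (A + 4*C + 3*B) * p^2 + (3*A + 4*C + B) * q^2"
    have expansion: "\<bar>X - Q/32\<bar> \<le> K * r^3"
      using second_order_expansion[OF ABC r(2)[symmetric] r(1) r\<Lambda>[unfolded \<Lambda>_def] y R]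
      unfolding X_def Q_def K_def \<Lambda>_def .
    have quad: "m * r^2 \<le> Q" "Q \<le> m' * r^2"
      unfolding m_def m'_def Q_def r(2) by (auto simp: distrib_left intro!: add_mono mult_right_mono)
    have "K * r^3 = (r * (64*K)) * r^2 / 64" by (simp add: power3_eq_cube power2_eq_square)
    also have "\<dots> \<le> m * r^2 / 64" using rK by (intro divide_right_mono mult_right_mono) auto
    finally have "K * r^3 \<le> m * r^2 / 64" .
    moreover have "K * r^3 \<le> K * r^2" using K r(1) r1 by (simp add: power_decreasing)
    ultimately have "m/64 * r^2 \<le> X" "X \<le> (m'/32 + K) * r^2"
      using expansion quad by (auto simp: abs_le_iff algebra_simps)
    then show "m/64 * (p^2+q^2) \<le> (p+q)/(2*(4-(p+q))) - (p + q - (p^2+q^2)/2)/(8*y) - R \<and>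
      (p+q)/(2*(4-(p+q))) - (p + q - (p^2+q^2)/2)/(8*y) - R \<le> (m'/32 + K) * (p^2+q^2)"
      unfolding X_def r(2) by simp
  qed
qed

section \<open>The local equilibrium\<close>

lemma xstar_eq:
  "xstar sx sy r = sqrt (2 * pi) * sqrt (cov_form sx sy r 1 1) / 4"
  unfolding xstar_def cov_form_def by (simp add: real_sqrt_mult mult.assoc)

lemma cov_form_two_minus:
  "cov_form sx sy r (2 - p) (2 - q) = 4 * cov_form sx sy r 1 1
     - 4 * (sx^2 * p + r * sx * sy * (p + q) + sy^2 * q) + cov_form sx sy r p q"
  unfolding cov_form_def by (simp add: power2_eq_square algebra_simps)

lemma cov_form_expansion_squeeze:
  assumes sx: "sx > 0" and sy: "sy > 0" and r: "-1 < r" "r < 1"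
    and pos: "sx^2 + 4*r* sx* sy + 3* sy^2 > 0" "3* sx^2 + 4*r* sx* sy + sy^2 > 0"
  defines "y \<equiv> \<lambda>p q. sqrt (cov_form sx sy r (2 - p) (2 - q)) / (2 * sqrt (cov_form sx sy r 1 1))"
  shows "\<exists>\<delta>>0. \<exists>\<kappa>>0. \<exists>M. \<forall>p q R. p^2 + q^2 < \<delta>^2 \<longrightarrow>
     \<bar>R\<bar> \<le> 2 * \<bar>(p + q - (p^2+q^2)/2) / (8 * y p q)\<bar>^3 \<longrightarrow>
     \<kappa> * (p^2+q^2) \<le> (p+q)/(2*(4-(p+q))) - (p + q - (p^2+q^2)/2)/(8 * y p q) - R \<and>
     (p+q)/(2*(4-(p+q))) - (p + q - (p^2+q^2)/2)/(8 * y p q) - R \<le> M * (p^2+q^2)"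
proof -
  define V where "V = cov_form sx sy r 1 1"
  have V: "V > 0" unfolding V_def by (rule cov_form_pos[OF sx sy r]) simp
  define A where "A = sx^2 / V"
  define B where "B = sy^2 / V"
  define C where "C = r * sx * sy / V"
  have "A + 2*C + B = (sx^2 + 2*r * sx * sy + sy^2) / V"
    "A + 4*C + 3*B = (sx^2 + 4*r * sx * sy + 3 * sy^2) / V"
    "3*A + 4*C + B = (3 * sx^2 + 4*r * sx * sy + sy^2) / V"
    using V unfolding A_def B_def C_def by (simp_all add: field_simps)
  moreover have "sx^2 + 2*r * sx * sy + sy^2 = V" unfolding V_def cov_form_def by simp
  ultimately have "A + 2*C + B = 1" "A + 4*C + 3*B > 0" "3*A + 4*C + B > 0"
    using V pos by simp_all
  from second_order_squeeze[OF this] obtain \<delta> \<kappa> M where \<delta>: "\<delta> > 0" and \<kappa>: "\<kappa> > 0"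
    and squeeze: "\<And>p q y R. p^2 + q^2 < \<delta>^2 \<Longrightarrow> y > 0 \<Longrightarrow>
       y^2 = 1 - (A*p + C*(p+q) + B*q) + (A*p^2 + 2*C*p*q + B*q^2)/4 \<Longrightarrow>
       \<bar>R\<bar> \<le> 2 * \<bar>(p + q - (p^2+q^2)/2) / (8*y)\<bar>^3 \<Longrightarrow>
       \<kappa> * (p^2+q^2) \<le> (p+q)/(2*(4-(p+q))) - (p + q - (p^2+q^2)/2)/(8*y) - R \<and>
       (p+q)/(2*(4-(p+q))) - (p + q - (p^2+q^2)/2)/(8*y) - R \<le> M * (p^2+q^2)"
    by metis
  show ?thesis
  proof (rule exI[of _ "min \<delta> 1"], rule conjI, use \<delta> in simp, rule exI[of _ \<kappa>], rule conjI[OF \<kappa>],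
      rule exI[of _ M], intro allI impI)
    fix p q R
    assume pq: "p^2 + q^2 < (min \<delta> 1)^2"
      and R: "\<bar>R\<bar> \<le> 2 * \<bar>(p + q - (p^2+q^2)/2) / (8 * y p q)\<bar>^3"
    have "(min \<delta> 1)^2 \<le> \<delta>^2" "(min \<delta> 1)^2 \<le> 1" using \<delta> by (auto intro: power_mono simp: abs_square_le_1)
    then have pq\<delta>: "p^2 + q^2 < \<delta>^2" and "p^2 + q^2 < 1" using pq by linarith+
    then have "(p, q) \<noteq> (2, 2)" by auto
    then have Q: "cov_form sx sy r (2 - p) (2 - q) > 0" by (intro cov_form_pos[OF sx sy r]) auto
    have "(y p q)^2 = cov_form sx sy r (2 - p) (2 - q) / (4 * V)"
      unfolding y_def V_def using Q V by (simp add: power_divide power_mult_distrib V_def)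
    also have "\<dots> = 1 - (A*p + C*(p+q) + B*q) + (A*p^2 + 2*C*p*q + B*q^2)/4"
      using V unfolding cov_form_two_minus V_def[symmetric] A_def B_def C_def
      by (simp add: cov_form_def field_simps)
    finally show "\<kappa> * (p^2+q^2) \<le> (p+q)/(2*(4-(p+q))) - (p + q - (p^2+q^2)/2)/(8 * y p q) - R \<and>
      (p+q)/(2*(4-(p+q))) - (p + q - (p^2+q^2)/2)/(8 * y p q) - R \<le> M * (p^2+q^2)"
      using squeeze[OF pq\<delta> _ _ R] Q V unfolding y_def V_def by simp
  qed
qed

text \<open>With the offset \<open>a = a\<^sup>* + s (p, q)\<close>, the constant \<open>s = x\<^sub>2\<^sup>*\<close> is exactly what turns the
  first-order term \<open>\<phi>(0) c\<close> of the distribution function into \<open>n / (8 y)\<close>.\<close>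
lemma payoff_threshold_near_equilibrium:
  assumes sx: "sx > 0" and sy: "sy > 0" and r: "-1 < r" "r < 1" and pq: "(p, q) \<noteq> (2, 2)"
  defines "s \<equiv> xstar sx sy r"
    and "y \<equiv> sqrt (cov_form sx sy r (2 - p) (2 - q)) / (2 * sqrt (cov_form sx sy r 1 1))"
  shows "std_normal_density 0 * payoff_threshold sx sy r (s*(p-1), s*(q-1)) (s, s)
       = (p + q - (p^2+q^2)/2) / (8*y)"
proof -
  define V where "V = cov_form sx sy r 1 1"
  define Q where "Q = cov_form sx sy r (2 - p) (2 - q)"
  have V: "V > 0" unfolding V_def by (rule cov_form_pos[OF sx sy r]) simp
  have Q: "Q > 0" unfolding Q_def using pq by (intro cov_form_pos[OF sx sy r]) auto
  have s: "s = sqrt (2*pi) * sqrt V / 4" unfolding s_def V_def by (rule xstar_eq)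
  have "s > 0" unfolding s using V by simp
  have "bisector_offset (s*(p-1), s*(q-1)) (s, s) = s^2 * (p + q - (p^2+q^2)/2)"
    unfolding bisector_offset_def by (simp add: power2_eq_square field_simps)
  moreover have "cov_form sx sy r (s - s*(p-1)) (s - s*(q-1)) = s^2 * Q"
    unfolding Q_def using cov_form_scale[of sx sy r s "2 - p" "2 - q"] by (simp add: algebra_simps)
  ultimately have "payoff_threshold sx sy r (s*(p-1), s*(q-1)) (s, s)
      = s * (p + q - (p^2+q^2)/2) / sqrt Q"
    using \<open>s > 0\<close> by (simp add: payoff_threshold_def real_sqrt_mult power2_eq_square)
  then show ?thesis
    unfolding y_def std_normal_density_zero s Q_def[symmetric] V_def[symmetric]
    using V Q by (simp add: field_simps)
qed

lemma Kpay_two_sided_quadratic_bound: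
  assumes sx: "sx > 0" and sy: "sy > 0" and r: "-1 < r" "r < 1"
    and pos: "sx^2 + 4*r * sx * sy + 3 * sy^2 > 0" "3 * sx^2 + 4*r * sx * sy + sy^2 > 0"
  defines "s \<equiv> xstar sx sy r"
  shows "\<exists>\<delta>>0. \<exists>\<kappa>>0. \<exists>M. \<forall>p q. p^2 + q^2 < \<delta>^2 \<longrightarrow>
     \<kappa> * (p^2 + q^2) \<le> Kpay sx sy r (s*(p-1), s*(q-1)) (s, s) \<and>
     Kpay sx sy r (s*(p-1), s*(q-1)) (s, s) \<le> M * (p^2 + q^2)"
proof -
  define y where "y = (\<lambda>p q. sqrt (cov_form sx sy r (2 - p) (2 - q)) / (2 * sqrt (cov_form sx sy r 1 1)))"
  have "s > 0" unfolding s_def xstar_eq using cov_form_pos[OF sx sy r, of 1 1] by simp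
  from cov_form_expansion_squeeze[OF sx sy r pos] obtain \<delta> \<kappa> M
    where \<delta>: "\<delta> > 0" and \<kappa>: "\<kappa> > 0" and squeeze: "\<And>p q R. p^2 + q^2 < \<delta>^2 \<Longrightarrow>
       \<bar>R\<bar> \<le> 2 * \<bar>(p + q - (p^2+q^2)/2) / (8 * y p q)\<bar>^3 \<Longrightarrow>
       \<kappa> * (p^2+q^2) \<le> (p+q)/(2*(4-(p+q))) - (p + q - (p^2+q^2)/2)/(8 * y p q) - R \<and>
       (p+q)/(2*(4-(p+q))) - (p + q - (p^2+q^2)/2)/(8 * y p q) - R \<le> M * (p^2+q^2)"
    unfolding y_def by metis
  show ?thesis
  proof (rule exI[of _ "min \<delta> 1"], rule conjI, use \<delta> in simp, rule exI[of _ "2 * s * \<kappa>"],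
      rule conjI, use \<open>s > 0\<close> \<kappa> in simp, rule exI[of _ "6 * s * M"], intro allI impI)
    fix p q assume pq: "p^2 + q^2 < (min \<delta> 1)^2"
    have "(min \<delta> 1)^2 \<le> \<delta>^2" "(min \<delta> 1)^2 \<le> 1" using \<delta> by (auto intro: power_mono simp: abs_square_le_1)
    then have pq\<delta>: "p^2 + q^2 < \<delta>^2" and "p^2 < 1" "q^2 < 1"
      using pq zero_le_power2[of p] zero_le_power2[of q] by linarith+
    then have "\<bar>p\<bar> < 1" "\<bar>q\<bar> < 1" by (simp_all add: abs_square_less_1)
    then have w: "2 < 4 - (p + q)" "4 - (p + q) \<le> 6" and ne: "(s*(p-1), s*(q-1)) \<noteq> (s, s)" "(p, q) \<noteq> (2, 2)"
      using \<open>s > 0\<close> by auto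
    define c where "c = payoff_threshold sx sy r (s*(p-1), s*(q-1)) (s, s)"
    define X where "X = (p+q)/(2*(4-(p+q))) - (p + q - (p^2+q^2)/2)/(8 * y p q)
        - (std_normal_cdf c - 1/2 - std_normal_density 0 * c)"
    have c: "std_normal_density 0 * c = (p + q - (p^2+q^2)/2)/(8 * y p q)"
      unfolding c_def y_def s_def by (rule payoff_threshold_near_equilibrium[OF sx sy r ne(2)])
    have X: "\<kappa> * (p^2+q^2) \<le> X" "X \<le> M * (p^2+q^2)"
      using squeeze[OF pq\<delta> std_normal_cdf_taylor_cubic[of c, unfolded c]] unfolding X_def c by auto
    have "Kpay sx sy r (s*(p-1), s*(q-1)) (s, s) = s * (p + q - 2) * std_normal_cdf c + 2 * s * (1 - std_normal_cdf c)"
      using Kpay_eq_std_normal_cdf[OF sx sy r ne(1)]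
      unfolding c_def[symmetric] std_normal_cdf_minus by (simp add: algebra_simps)
    also have "\<dots> = s * (4 - (p + q)) * X"
      unfolding X_def c[symmetric] using w by (simp add: field_simps)
    finally have K: "Kpay sx sy r (s*(p-1), s*(q-1)) (s, s) = s * (4 - (p + q)) * X" .
    have "0 \<le> \<kappa> * (p^2+q^2)" using \<kappa> by simp
    then show "2 * s * \<kappa> * (p^2 + q^2) \<le> Kpay sx sy r (s*(p-1), s*(q-1)) (s, s) \<and>
      Kpay sx sy r (s*(p-1), s*(q-1)) (s, s) \<le> 6 * s * M * (p^2 + q^2)"
      unfolding K using X w \<open>s > 0\<close>
      by (auto simp: mult.assoc intro!: mult_left_mono mult_mono order_trans[OF _ X(2)])
  qed
qed

lemma Kpay_local_quadratic_growth:
  assumes sx: "sx > 0" and sy: "sy > 0" and r: "-1 < r" "r < 1"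
    and pos: "sx^2 + 4*r * sx * sy + 3 * sy^2 > 0" "3 * sx^2 + 4*r * sx * sy + sy^2 > 0"
  defines "s \<equiv> xstar sx sy r"
  shows "\<exists>\<delta>>0. \<exists>C. \<forall>a. dist a (-s, -s) < \<delta> \<longrightarrow>
     (a \<noteq> (-s, -s) \<longrightarrow> 0 < Kpay sx sy r a (s, s)) \<and>
     \<bar>Kpay sx sy r a (s, s)\<bar> \<le> C * (dist a (-s, -s))^2"
proof -
  have "s > 0" unfolding s_def xstar_eq using cov_form_pos[OF sx sy r, of 1 1] by simp
  from Kpay_two_sided_quadratic_bound[OF sx sy r pos] obtain \<delta> \<kappa> M where \<delta>: "\<delta> > 0" and \<kappa>: "\<kappa> > 0"
    and bound: "\<And>p q. p^2 + q^2 < \<delta>^2 \<Longrightarrow> \<kappa> * (p^2 + q^2) \<le> Kpay sx sy r (s*(p-1), s*(q-1)) (s, s) \<and>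
       Kpay sx sy r (s*(p-1), s*(q-1)) (s, s) \<le> M * (p^2 + q^2)"
    unfolding s_def by metis
  show ?thesis
  proof (rule exI[of _ "s * \<delta>"], rule conjI, use \<open>s > 0\<close> \<delta> in simp,
      rule exI[of _ "M / s^2"], intro allI impI)
    fix a :: "real \<times> real"
    assume near: "dist a (-s, -s) < s * \<delta>"
    define p where "p = (fst a + s) / s"
    define q where "q = (snd a + s) / s"
    have a: "a = (s*(p-1), s*(q-1))" using \<open>s > 0\<close> unfolding p_def q_def by (simp add: field_simps)
    have dist: "(dist a (-s, -s))^2 = s^2 * (p^2 + q^2)"
      unfolding a by (simp add: dist_Pair_Pair dist_real_def power_mult_distrib algebra_simps)
    have "s^2 * (p^2 + q^2) < s^2 * \<delta>^2"
      using power_strict_mono[OF near, of 2] unfolding dist by (simp add: power_mult_distrib)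
    then have "p^2 + q^2 < \<delta>^2" using \<open>s > 0\<close> by simp
    note K = bound[OF this, folded a]
    show "(a \<noteq> (-s, -s) \<longrightarrow> 0 < Kpay sx sy r a (s, s)) \<and>
        \<bar>Kpay sx sy r a (s, s)\<bar> \<le> M / s^2 * (dist a (-s, -s))^2"
    proof
      show "a \<noteq> (-s, -s) \<longrightarrow> 0 < Kpay sx sy r a (s, s)"
      proof
        assume "a \<noteq> (-s, -s)"
        then have "p \<noteq> 0 \<or> q \<noteq> 0" using \<open>s > 0\<close> unfolding a by auto
        then have "0 < \<kappa> * (p^2 + q^2)" using \<kappa> by (simp add: sum_power2_gt_zero_iff)
        then show "0 < Kpay sx sy r a (s, s)" using K by linarith
      qed
      have "0 \<le> \<kappa> * (p^2 + q^2)" using \<kappa> by simp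
      then show "\<bar>Kpay sx sy r a (s, s)\<bar> \<le> M / s^2 * (dist a (-s, -s))^2"
        using K \<open>s > 0\<close> unfolding dist by simp
    qed
  qed
qed

lemma has_real_derivative_zero_if_quadratic_bound:
  fixes f :: "real \<Rightarrow> real"
  assumes \<delta>: "\<delta> > 0" and bound: "\<And>t. \<bar>t - t0\<bar> < \<delta> \<Longrightarrow> \<bar>f t - f t0\<bar> \<le> C * (t - t0)^2"
  shows "(f has_real_derivative 0) (at t0)"
proof -
  have "((\<lambda>t. (f t - f t0) / (t - t0)) \<longlongrightarrow> 0) (at t0)"
  proof (rule Lim_null_comparison)
    show "\<forall>\<^sub>F t in at t0. norm ((f t - f t0) / (t - t0)) \<le> \<bar>C\<bar> * \<bar>t - t0\<bar>"
      unfolding eventually_at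
    proof (intro exI[of _ \<delta>] conjI \<delta> ballI impI)
      fix t assume "t \<in> UNIV" "t \<noteq> t0 \<and> dist t t0 < \<delta>"
      then have t: "t \<noteq> t0" "\<bar>t - t0\<bar> < \<delta>" by (auto simp: dist_real_def)
      have "\<bar>f t - f t0\<bar> \<le> \<bar>C\<bar> * (\<bar>t - t0\<bar> * \<bar>t - t0\<bar>)"
        using bound[OF t(2)] abs_ge_self[of C] mult_right_mono[of C "\<bar>C\<bar>" "(t - t0)^2"]
        by (simp add: power2_eq_square abs_mult_self_eq)
      then show "norm ((f t - f t0) / (t - t0)) \<le> \<bar>C\<bar> * \<bar>t - t0\<bar>"
        using t by (simp add: abs_divide divide_le_eq mult.assoc)
    qed
    have "((\<lambda>t. \<bar>C\<bar> * \<bar>t - t0\<bar>) \<longlongrightarrow> \<bar>C\<bar> * \<bar>t0 - t0\<bar>) (at t0)" by (intro tendsto_intros)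
    then show "((\<lambda>t. \<bar>C\<bar> * \<bar>t - t0\<bar>) \<longlongrightarrow> 0) (at t0)" by simp
  qed
  then show ?thesis by (simp add: has_field_derivative_iff)
qed

lemma partial_derivatives_zero_if_quadratic_bound:
  fixes f :: "real \<times> real \<Rightarrow> real"
  assumes \<delta>: "\<delta> > 0" and bound: "\<And>z. dist z c < \<delta> \<Longrightarrow> \<bar>f z - f c\<bar> \<le> C * (dist z c)^2"
  shows "((\<lambda>t. f (t, snd c)) has_real_derivative 0) (at (fst c))"
    and "((\<lambda>t. f (fst c, t)) has_real_derivative 0) (at (snd c))"
proof -
  have "dist (t, snd c) c = \<bar>t - fst c\<bar>" "dist (fst c, t) c = \<bar>t - snd c\<bar>" for t
    by (cases c, simp add: dist_Pair_Pair dist_real_def)+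
  note dist = this
  show "((\<lambda>t. f (t, snd c)) has_real_derivative 0) (at (fst c))"
  proof (rule has_real_derivative_zero_if_quadratic_bound[OF \<delta>])
    fix t assume "\<bar>t - fst c\<bar> < \<delta>"
    then show "\<bar>f (t, snd c) - f (fst c, snd c)\<bar> \<le> C * (t - fst c)^2"
      using bound[of "(t, snd c)"] dist by simp
  qed
  show "((\<lambda>t. f (fst c, t)) has_real_derivative 0) (at (snd c))"
  proof (rule has_real_derivative_zero_if_quadratic_bound[OF \<delta>])
    fix t assume "\<bar>t - snd c\<bar> < \<delta>"
    then show "\<bar>f (fst c, t) - f (fst c, snd c)\<bar> \<le> C * (t - snd c)^2"
      using bound[of "(fst c, t)"] dist by simp
  qed
qed

theorem mainTheorem7:
  fixes sx sy r :: real
  assumes "sx > 0" and "sy > 0" and "-1 < r" and "r < 1"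
    and "r > max (- (sx^2 + 3 * sy^2) / (4 * sx * sy)) (- (3 * sx^2 + sy^2) / (4 * sx * sy))"
  defines "K \<equiv> Kpay sx sy r"
      and "s \<equiv> xstar sx sy r"
  shows "((\<lambda>t. K (t, -s) (s, s)) has_real_derivative 0) (at (-s))
       \<and> ((\<lambda>t. K (-s, t) (s, s)) has_real_derivative 0) (at (-s))
       \<and> ((\<lambda>t. K (-s, -s) (t, s)) has_real_derivative 0) (at s)
       \<and> ((\<lambda>t. K (-s, -s) (s, t)) has_real_derivative 0) (at s)
       \<and> (\<exists>e>0. \<forall>a. a \<noteq> (-s, -s) \<and> dist a (-s, -s) < e \<longrightarrow> K (-s, -s) (s, s) < K a (s, s))
       \<and> (\<exists>e>0. \<forall>b. b \<noteq> (s, s) \<and> dist b (s, s) < e \<longrightarrow> K (-s, -s) b < K (-s, -s) (s, s))"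
proof -
  have "sx^2 + 4*r * sx * sy + 3 * sy^2 > 0" "3 * sx^2 + 4*r * sx * sy + sy^2 > 0"
    using assms(1,2,5) by (simp_all add: divide_less_eq algebra_simps)
  from Kpay_local_quadratic_growth[OF assms(1-4) this] obtain \<delta> C where \<delta>: "\<delta> > 0"
    and near: "\<And>a. dist a (-s, -s) < \<delta> \<Longrightarrow> (a \<noteq> (-s, -s) \<longrightarrow> 0 < K a (s, s)) \<and>
       \<bar>K a (s, s)\<bar> \<le> C * (dist a (-s, -s))^2"
    unfolding K_def s_def by metis
  have K0: "K (-s, -s) (s, s) = 0" using near[of "(-s, -s)"] \<delta> by simp
  have antisym: "K (-s, -s) b = - K (-b) (s, s)" for b
    using Kpay_antisym[OF assms(1-4), of "(s, s)" "-b"] unfolding K_def by simp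
  have near': "(b \<noteq> (s, s) \<longrightarrow> K (-s, -s) b < 0) \<and> \<bar>K (-s, -s) b\<bar> \<le> C * (dist b (s, s))^2"
    if "dist b (s, s) < \<delta>" for b
  proof -
    have "dist (-b) (-s, -s) = dist b (s, s)" by (metis dist_minus uminus_Pair)
    moreover have "-b \<noteq> (-s, -s) \<longleftrightarrow> b \<noteq> (s, s)" by (metis minus_minus uminus_Pair)
    ultimately show ?thesis using near[of "-b"] that unfolding antisym by auto
  qed
  have "\<bar>K a (s, s) - K (-s, -s) (s, s)\<bar> \<le> C * (dist a (-s, -s))^2" if "dist a (-s, -s) < \<delta>" for a
    using near[OF that] K0 by simp
  note player1 = partial_derivatives_zero_if_quadratic_bound[where f="\<lambda>a. K a (s, s)", OF \<delta> this]
  have "\<bar>K (-s, -s) b - K (-s, -s) (s, s)\<bar> \<le> C * (dist b (s, s))^2" if "dist b (s, s) < \<delta>" for b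
    using near'[OF that] K0 by simp
  note player2 = partial_derivatives_zero_if_quadratic_bound[where f="K (-s, -s)", OF \<delta> this]
  show ?thesis
    using player1 player2 near near' K0 \<delta> by auto
qed

end
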